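(* Let $m\ge1$ and, for $\mathfrak{g}\in\{\mathfrak{h}_s,\mathfrak{r}_s,\mathfrak{d}_s\}$, $\mathcal{G}(q)=\max\{\mathfrak{g}(\tau):\tau\in T,\ \rho(\tau)\le q\}$. Then for $q\in\{\frac12,1,\frac32,2,\dots\}$: $\mathcal{G}(q)=\lfloor q+\frac12\rfloor$ for $\mathfrak{g}=\mathfrak{h}_s$ (simple iterations of semi-implicit methods); $\mathcal{G}(q)=\lfloor\frac23(q+1)\rfloor$ for $\mathfrak{g}=\mathfrak{r}_s$ (modified Newton iterations); $\mathcal{G}(q)=\lfloor\log_2\frac{q+1}{3}\rfloor+2$ for $\mathfrak{g}=\mathfrak{d}_s$ (full Newton iterations).
   Context: $T$: the empty tree $\emptyset$ and all $\tau=[\tau_1,\dots,\tau_\kappa]_l$ with $l\in\{0,\dots,m\}$, $\kappa\ge0$, $\tau_j\in T\setminus\{\emptyset\}$ unordered (new root of color $l$ joined to roots of the $\tau_j$; $\bullet_l$ if $\kappa=0$). Order: $\rho(\emptyset)=0$, $\rho([\tau_1,\dots,\tau_\kappa]_l)=\sum_j\rho(\tau_j)+1$ if $l=0$, $+\frac12$ if $l\ge1$. Maxima over empty sets are $0$. $\mathfrak{h}_s(\emptyset)=0$, $\mathfrak{h}_s([\tau_1,\dots,\tau_\kappa]_l)=1$ if $l>0$, $=1+\max_j\mathfrak{h}_s(\tau_j)$ if $l=0$. $\mathfrak{r}_s(\emptyset)=0$, $\mathfrak{r}_s(\bullet_l)=1$; for $\tau=[\tau_1,\dots,\tau_\kappa]_l$: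 $1$ if $l>0$; $\mathfrak{r}_s(\tau_1)$ if $l=0,\kappa=1$; $1+\max_j\mathfrak{r}_s(\tau_j)$ if $l=0,\kappa\ge2$. $\mathfrak{d}_s(\emptyset)=0$, $\mathfrak{d}_s(\bullet_l)=1$; for $\tau=[\tau_1,\dots,\tau_\kappa]_l$: $1$ if $l>0$; with $M=\max_j\mathfrak{d}_s(\tau_j)$, $M$ if $l=0$ and exactly one $i$ has $\mathfrak{d}_s(\tau_i)=M$, and $M+1$ if $l=0$ and at least two indices attain $M$. (These are the growth functions of simple, modified Newton and full Newton iterations for semi-implicit stochastic Taylor methods, i.e. those with $\Phi_{im}(\tau)\equiv0$ unless the root of $\tau$ has color $0$.) *)

theory Defs
  imports Complex_Main "HOL-Library.Multiset"
begin

text \<open>Colored unordered rooted trees: Empty is the empty tree; Node l ts is the tree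
  with a new root of colour l joined to the roots of the (unordered) multiset ts of subtrees.\<close>
datatype stree = Empty | Node nat "stree multiset"

primrec tree_wf :: "nat \<Rightarrow> stree \<Rightarrow> bool" where
  "tree_wf m Empty = True"
| "tree_wf m (Node l ts) = (l \<le> m \<and> Empty \<notin># ts \<and> (\<forall>b\<in>#image_mset (tree_wf m) ts. b))"

definition maxm :: "nat multiset \<Rightarrow> nat" where
  "maxm M = (if M = {#} then 0 else Max (set_mset M))"

primrec rho :: "stree \<Rightarrow> real" where
  "rho Empty = 0"
| "rho (Node l ts) = (\<Sum>\<^sub># (image_mset rho ts)) + (if l = 0 then 1 else 1/2)"

primrec h_s :: "stree \<Rightarrow> nat" where
  "h_s Empty = 0"
| "h_s (Node l ts) = (if l > 0 then 1 else 1 + maxm (image_mset h_s ts))"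

primrec r_s :: "stree \<Rightarrow> nat" where
  "r_s Empty = 0"
| "r_s (Node l ts) =
     (if ts = {#} then 1
      else if l > 0 then 1
      else if size ts = 1 then maxm (image_mset r_s ts)
      else 1 + maxm (image_mset r_s ts))"

primrec d_s :: "stree \<Rightarrow> nat" where
  "d_s Empty = 0"
| "d_s (Node l ts) =
     (if ts = {#} then 1
      else if l > 0 then 1
      else if count (image_mset d_s ts) (maxm (image_mset d_s ts)) = 1
           then maxm (image_mset d_s ts)
      else maxm (image_mset d_s ts) + 1)"

definition Gmax :: "(stree \<Rightarrow> nat) \<Rightarrow> nat \<Rightarrow> real \<Rightarrow> nat" where
  "Gmax g m q = Max {g \<tau> | \<tau>. tree_wf m \<tau> \<and> rho \<tau> \<le> q}"

end

theory Submission
  imports Defs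
begin

text \<open>For each growth function g we determine the least order \<phi>(n) of a tree with g \<tau> = n:
  \<phi>(n) = n - 1/2 for h_s, 3n/2 - 1 for r_s and 3 \<cdot> 2^n/4 - 1 for d_s. The lower bound
  \<phi>(g \<tau>) \<le> \<rho>(\<tau>) follows by induction on \<tau>: a root of colour 0 adds 1 to the order, and for
  r_s (resp. d_s) the growth can only exceed that of the leading subtree when a second
  nonempty subtree (resp. a second subtree of the same growth) is present, whose order is then
  added as well. The bound is attained by stems, combs and complete binary trees with leaves of
  colour 1. Hence G(q) is the largest n with \<phi>(n) \<le> q, which is the stated floor.\<close>

lemma sum_mset_image_le_of_subset:
  fixes f :: "'a \<Rightarrow> 'b::ordered_comm_monoid_add"
  assumes "N \<subseteq># M" and "\<And>x. x \<in># M \<Longrightarrow> 0 \<le> f x"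
  shows "(\<Sum>x\<in>#N. f x) \<le> (\<Sum>x\<in>#M. f x)"
proof -
  obtain K where M: "M = N + K" using assms(1) by (auto simp: subset_mset.le_iff_add)
  have "0 \<le> (\<Sum>x\<in>#K. f x)" using sum_mset_mono[of K "\<lambda>_. 0" f] assms(2) by (simp add: M)
  then show ?thesis by (simp add: M add_increasing2)
qed

lemma maxm_image_attained:
  assumes "ts \<noteq> {#}"
  obtains t where "t \<in># ts" and "maxm (image_mset f ts) = f t"
proof -
  have "maxm (image_mset f ts) \<in> f ` set_mset ts"
    using assms by (simp add: maxm_def)
  then show ?thesis using that by blast
qed

lemma rho_nonneg: "0 \<le> rho \<tau>"
proof (induction \<tau>)
  case (Node l ts)
  then have "0 \<le> (\<Sum>t\<in>#ts. rho t)"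
    using sum_mset_image_le_of_subset[of "{#}" ts rho] by simp
  then show ?case by simp
qed simp

lemma rho_Node_ge: "1/2 \<le> rho (Node l ts)"
  using sum_mset_image_le_of_subset[of "{#}" ts rho] rho_nonneg by auto

lemma rho_subtrees_le: "N \<subseteq># ts \<Longrightarrow> (\<Sum>t\<in>#N. rho t) + 1 \<le> rho (Node 0 ts)"
  using sum_mset_image_le_of_subset[of N ts rho] rho_nonneg by auto

lemma two_subtrees_subset:
  assumes "t \<in># ts" and "s \<in># ts - {#t#}"
  shows "{#t, s#} \<subseteq># ts"
proof -
  have "{#s#} \<subseteq># ts - {#t#}" using assms(2) by simp
  then have "add_mset t {#s#} \<subseteq># add_mset t (ts - {#t#})" by simp
  then show ?thesis using insert_DiffM[OF assms(1)] by simp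
qed

lemma h_s_le_rho: "real (h_s \<tau>) - 1/2 \<le> rho \<tau>"
proof (induction \<tau>)
  case (Node l ts)
  show ?case
  proof (cases "l = 0 \<and> ts \<noteq> {#}")
    case True
    then have [simp]: "l = 0" and "ts \<noteq> {#}" by auto
    then obtain t where t: "t \<in># ts" "maxm (image_mset h_s ts) = h_s t"
      by (auto elim: maxm_image_attained)
    have "rho t \<le> rho (Node l ts) - 1"
      using rho_subtrees_le[of "{#t#}" ts] t(1) by simp
    then show ?thesis using Node.IH[OF t(1)] t(2) by simp
  next
    case False
    then show ?thesis using rho_Node_ge[of l ts] by (auto simp: maxm_def)
  qed
qed simp

lemma r_s_le_rho: "tree_wf m \<tau> \<Longrightarrow> 3/2 * real (r_s \<tau>) - 1 \<le> rho \<tau>"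
proof (induction \<tau>)
  case (Node l ts)
  show ?case
  proof (cases "l = 0 \<and> ts \<noteq> {#}")
    case True
    then have [simp]: "l = 0" and "ts \<noteq> {#}" by auto
    then obtain t where t: "t \<in># ts" "maxm (image_mset r_s ts) = r_s t"
      by (auto elim: maxm_image_attained)
    have IH: "3/2 * real (r_s t) - 1 \<le> rho t"
      using Node t(1) by simp
    show ?thesis
    proof (cases "size ts = 1")
      case True
      have "rho t \<le> rho (Node l ts) - 1"
        using rho_subtrees_le[of "{#t#}" ts] t(1) by simp
      then show ?thesis using IH t(2) True by simp
    next
      case False
      have "size ts \<noteq> 0" using \<open>ts \<noteq> {#}\<close> by simp
      then have "size (ts - {#t#}) \<noteq> 0"
        using False size_Diff_singleton[OF t(1)] by linarith
      then have "ts - {#t#} \<noteq> {#}" by auto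
      then obtain s where s: "s \<in># ts - {#t#}" by (meson multiset_nonemptyE)
      have "s \<noteq> Empty" using s Node.prems by (auto dest: in_diffD)
      then have "1/2 \<le> rho s" by (metis rho_Node_ge stree.exhaust)
      moreover have "rho t + rho s \<le> rho (Node l ts) - 1"
        using rho_subtrees_le[OF two_subtrees_subset[OF t(1) s]] by simp
      ultimately show ?thesis using IH t(2) False by simp
    qed
  next
    case False
    then show ?thesis using rho_Node_ge[of l ts] by auto
  qed
qed simp

lemma d_s_le_rho: "3/4 * 2 ^ d_s \<tau> - 1 \<le> rho \<tau>"
proof (induction \<tau>)
  case (Node l ts)
  show ?case
  proof (cases "l = 0 \<and> ts \<noteq> {#}")
    case True
    then have [simp]: "l = 0" and "ts \<noteq> {#}" by auto
    then obtain t where t: "t \<in># ts" "maxm (image_mset d_s ts) = d_s t"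
      by (auto elim: maxm_image_attained)
    have IH: "3/4 * 2 ^ d_s t - 1 \<le> rho t"
      using Node.IH t(1) by simp
    show ?thesis
    proof (cases "count (image_mset d_s ts) (d_s t) = 1")
      case True
      have "rho t \<le> rho (Node l ts) - 1"
        using rho_subtrees_le[of "{#t#}" ts] t(1) by simp
      then show ?thesis using IH t(2) True by simp
    next
      case False
      have "count (image_mset d_s ts) (d_s t) = count (image_mset d_s (ts - {#t#})) (d_s t) + 1"
        by (subst insert_DiffM[OF t(1), symmetric]) simp
      then have "d_s t \<in># image_mset d_s (ts - {#t#})"
        using False by (simp add: count_eq_zero_iff[symmetric])
      then obtain s where s: "s \<in># ts - {#t#}" "d_s s = d_s t" by auto
      have "3/4 * 2 ^ d_s t - 1 \<le> rho s"
        using Node.IH[OF in_diffD[OF s(1)]] s(2) by simp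
      moreover have "rho t + rho s \<le> rho (Node l ts) - 1"
        using rho_subtrees_le[OF two_subtrees_subset[OF t(1) s(1)]] by simp
      ultimately show ?thesis using IH t(2) False by simp
    qed
  next
    case False
    then show ?thesis using rho_Node_ge[of l ts] by auto
  qed
qed simp

primrec stem_tree :: "nat \<Rightarrow> stree" where
  "stem_tree 0 = Node 1 {#}"
| "stem_tree (Suc j) = Node 0 {#stem_tree j#}"

primrec comb_tree :: "nat \<Rightarrow> stree" where
  "comb_tree 0 = Node 1 {#}"
| "comb_tree (Suc j) = Node 0 {#comb_tree j, Node 1 {#}#}"

primrec binary_tree :: "nat \<Rightarrow> stree" where
  "binary_tree 0 = Node 1 {#}"
| "binary_tree (Suc j) = Node 0 {#binary_tree j, binary_tree j#}"

lemma stem_tree_attains: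
  "1 \<le> m \<Longrightarrow> tree_wf m (stem_tree j) \<and> h_s (stem_tree j) = Suc j
    \<and> rho (stem_tree j) = real (Suc j) - 1/2"
  by (induction j) (auto simp: maxm_def)

lemma comb_tree_attains:
  "1 \<le> m \<Longrightarrow> tree_wf m (comb_tree j) \<and> r_s (comb_tree j) = Suc j
    \<and> rho (comb_tree j) = 3/2 * real (Suc j) - 1"
  by (induction j) (auto simp: maxm_def field_simps)

lemma binary_tree_attains:
  "1 \<le> m \<Longrightarrow> tree_wf m (binary_tree j) \<and> d_s (binary_tree j) = Suc j
    \<and> rho (binary_tree j) = 3/4 * 2 ^ Suc j - 1"
  by (induction j) (auto simp: maxm_def)

lemma Gmax_eqI:
  assumes "\<And>\<tau>. tree_wf m \<tau> \<Longrightarrow> rho \<tau> \<le> q \<Longrightarrow> g \<tau> \<le> n"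
    and "tree_wf m w" and "rho w \<le> q" and "g w = n"
  shows "Gmax g m q = n"
  unfolding Gmax_def
proof (rule Max_eqI)
  show "finite {g \<tau> |\<tau>. tree_wf m \<tau> \<and> rho \<tau> \<le> q}"
    by (rule finite_subset[of _ "{..n}"]) (auto dest: assms(1))
qed (use assms in blast)+

lemma Gmax_eq_if_least_order:
  fixes \<phi> :: "nat \<Rightarrow> real"
  assumes "mono \<phi>"
    and lower: "\<And>\<tau>. tree_wf m \<tau> \<Longrightarrow> \<phi> (g \<tau>) \<le> rho \<tau>"
    and "tree_wf m w" "g w = n" "rho w = \<phi> n"
    and "\<phi> n \<le> q" and "q < \<phi> (Suc n)"
  shows "Gmax g m q = n"
proof (rule Gmax_eqI)
  fix \<tau> assume \<tau>: "tree_wf m \<tau>" "rho \<tau> \<le> q"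
  show "g \<tau> \<le> n"
  proof (rule ccontr)
    assume "\<not> g \<tau> \<le> n"
    then have "\<phi> (Suc n) \<le> \<phi> (g \<tau>)" using \<open>mono \<phi>\<close> by (simp add: monoD)
    then show False using lower[OF \<tau>(1)] \<tau>(2) \<open>q < \<phi> (Suc n)\<close> by linarith
  qed
qed (use assms in auto)

lemma Gmax_h_s:
  assumes "1 \<le> m" and "1/2 \<le> q"
  shows "int (Gmax h_s m q) = \<lfloor>q + 1/2\<rfloor>"
proof -
  have "0 < \<lfloor>q + 1/2\<rfloor>" using assms(2) by linarith
  then obtain j where j: "\<lfloor>q + 1/2\<rfloor> = int (Suc j)"
    using pos_int_cases gr0_implies_Suc by metis
  then have bounds: "real (Suc j) - 1/2 \<le> q" "q < real (Suc (Suc j)) - 1/2"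
    by (simp_all add: floor_eq_iff)
  have "Gmax h_s m q = Suc j"
  proof (rule Gmax_eq_if_least_order[where \<phi> = "\<lambda>n. real n - 1/2"])
    show "mono (\<lambda>n. real n - 1/2 :: real)" by (simp add: mono_def)
  qed (use bounds h_s_le_rho stem_tree_attains[OF assms(1)] in auto)
  with j show ?thesis by simp
qed

lemma Gmax_r_s:
  assumes "1 \<le> m" and "1/2 \<le> q"
  shows "int (Gmax r_s m q) = \<lfloor>2/3 * (q + 1)\<rfloor>"
proof -
  have "0 < \<lfloor>2/3 * (q + 1)\<rfloor>" using assms(2) by (simp add: zero_less_floor)
  then obtain j where j: "\<lfloor>2/3 * (q + 1)\<rfloor> = int (Suc j)"
    using pos_int_cases gr0_implies_Suc by metis
  then have bounds: "3/2 * real (Suc j) - 1 \<le> q" "q < 3/2 * real (Suc (Suc j)) - 1"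
    by (simp_all add: floor_eq_iff field_simps)
  have "Gmax r_s m q = Suc j"
  proof (rule Gmax_eq_if_least_order[where \<phi> = "\<lambda>n. 3/2 * real n - 1"])
    show "mono (\<lambda>n. 3/2 * real n - 1 :: real)" by (simp add: mono_def)
  qed (use bounds r_s_le_rho comb_tree_attains[OF assms(1)] in auto)
  with j show ?thesis by simp
qed

lemma Gmax_d_s:
  assumes "1 \<le> m" and "1/2 \<le> q"
  shows "int (Gmax d_s m q) = \<lfloor>log 2 ((q + 1) / 3)\<rfloor> + 2"
proof -
  define x where "x = 4 * ((q + 1) / 3)"
  have "2 \<le> x" using assms(2) by (simp add: x_def)
  have log_x: "log 2 x = log 2 ((q + 1) / 3) + 2"
    using log_mult[of 2 4 "(q + 1) / 3"] log_pow_cancel[of 2 2] assms(2) by (simp add: x_def)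
  have "1 \<le> log 2 x" using \<open>2 \<le> x\<close> by simp
  then have "0 < \<lfloor>log 2 x\<rfloor>" by linarith
  then obtain j where j: "\<lfloor>log 2 x\<rfloor> = int (Suc j)"
    using pos_int_cases gr0_implies_Suc by metis
  then have "2 ^ Suc j \<le> x \<and> x < 2 ^ Suc (Suc j)"
    using \<open>2 \<le> x\<close> floor_log_eq_powr_iff[of x 2 "int (Suc j)"]
      powr_realpow[of 2 "Suc j"] powr_realpow[of 2 "Suc (Suc j)"] by simp
  then have bounds: "3/4 * 2 ^ Suc j - 1 \<le> q" "q < 3/4 * 2 ^ Suc (Suc j) - 1"
    by (simp_all add: x_def)
  have "Gmax d_s m q = Suc j"
  proof (rule Gmax_eq_if_least_order[where \<phi> = "\<lambda>n. 3/4 * 2 ^ n - 1"])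
    show "mono (\<lambda>n. 3/4 * 2 ^ n - 1 :: real)" by (auto simp: mono_def intro!: power_increasing)
  qed (use bounds d_s_le_rho binary_tree_attains[OF assms(1)] in auto)
  with j log_x show ?thesis by linarith
qed

theorem mainTheorem10:
  fixes m k :: nat
  assumes "m \<ge> 1" and "k \<ge> 1"
  shows "int (Gmax h_s m (real k / 2)) = \<lfloor>real k / 2 + 1/2\<rfloor>
       \<and> int (Gmax r_s m (real k / 2)) = \<lfloor>2/3 * (real k / 2 + 1)\<rfloor>
       \<and> int (Gmax d_s m (real k / 2)) = \<lfloor>log 2 ((real k / 2 + 1) / 3)\<rfloor> + 2"
proof -
  have "1/2 \<le> real k / 2" using assms(2) by simp
  then show ?thesis using Gmax_h_s Gmax_r_s Gmax_d_s assms(1) by blast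
qed

end
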